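(* Assuming all locks are fair and the underlying system scheduler is fair, in the algorithm KSFTM every transaction either commits or aborts in finite time.
   Context: Algorithm KSFTM (parameters: integer $K\ge1$, constants $C>0$, $incVal\ge1$). A global atomic counter, initially 1. Each t-object $x$ stores at most $K$ versions $\langle ts, val, rl, vrt\rangle$. Each transaction $T_i$ has timestamps $its_i, cts_i, wts_i = cts_i + C(cts_i-its_i)$, limits $tltl_i, tutl_i$, a commit time $ct_i$, a flag $valid_i$ and a status, protected by a per-transaction lock; each t-object has a lock. A transaction executes begin, then finitely many reads/writes, then tryC (or aborts earlier when an operation returns abort). begin: reads and atomically increments the counter, initializes the transaction's fields. read($x$): if $x$ is local returns it; otherwise acquires the lock of $x$ and then that of $T_i$, finds the version with largest $ts<wts_i$ and the one with smallest $ts>wts_i$, updates $tltl_i,tutl_i$, possibly aborts (releasing locks), otherwise records the read, releases the locks and returns. write: stores locally. tryC: acquires the locks of the t-objects of its write set in a fixed global order, then the locks of the relevant reading transactions and its own in a fixed global order; performs loops only over the finite write set and finite reader lists (validation, aborting or marking conflicting transactions, updating limits, incrementing the counter, installing new versions); releases all locks and returns commit or abort. Fairness of a scheduler means no thread is forever delayed or crashed; a fair lock is eventually granted to every requester. *)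

theory Defs
  imports Main "HOL-Library.Product_Lexorder"
begin

text \<open>
  An abstract operational model of the control and locking structure of the
  algorithm KSFTM.  Threads (a finite set, type 'th) execute transactions one
  after the other; the n-th transaction of thread th has identifier (th, n).
  The program of a transaction is a finite list of read / write operations on
  t-objects; (prog th n = None) means that thread th runs no n-th transaction.
  Data-dependent decisions of KSFTM (which versions are found, whether a read
  or tryC aborts, which readers are relevant, how many iterations the finite
  loops inside a critical section take) are left nondeterministic, so every
  behaviour of KSFTM is a behaviour of this model.
\<close>

datatype 'obj op = Rd 'obj | Wr 'obj

type_synonym 'th tid = "'th \<times> nat"

datatype ('obj, 'th) lock = ObjL 'obj | TxL "'th tid"

datatype outcome = Committed | Aborted

datatype ('obj, 'th) lpc =
    Idle                              \<comment> \<open>current transaction not yet begun\<close>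
  | Ready nat                         \<comment> \<open>next operation index\<close>
  | RdLockObj nat 'obj                \<comment> \<open>read(x): requesting lock of x\<close>
  | RdLockTx nat 'obj                 \<comment> \<open>read(x): holding x, requesting own lock\<close>
  | RdCS nat 'obj nat                 \<comment> \<open>read(x): in critical section, remaining steps\<close>
  | CLockObj "'obj list"              \<comment> \<open>tryC: object locks still to acquire\<close>
  | CLockTx "'th tid list"            \<comment> \<open>tryC: transaction locks still to acquire\<close>
  | CCS nat                           \<comment> \<open>tryC: in critical section, remaining steps\<close>
  | Finished                          \<comment> \<open>thread has no further transaction\<close>

record ('obj, 'th) gstate =
  txn     :: "'th \<Rightarrow> nat"                         \<comment> \<open>index of current transaction\<close>
  lpc     :: "'th \<Rightarrow> ('obj, 'th) lpc"
  holder  :: "('obj, 'th) lock \<Rightarrow> 'th option"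
  counter :: nat
  cts     :: "'th tid \<Rightarrow> nat"                     \<comment> \<open>timestamp obtained in begin\<close>
  result  :: "'th tid \<Rightarrow> outcome option"

definition init_state :: "('obj, 'th) gstate" where
  "init_state = \<lparr> txn = (\<lambda>_. 0), lpc = (\<lambda>_. Idle), holder = (\<lambda>_. None),
                  counter = 1, cts = (\<lambda>_. 0), result = (\<lambda>_. None) \<rparr>"

definition write_objs :: "'obj op list \<Rightarrow> 'obj set" where
  "write_objs ops = {x. Wr x \<in> set ops}"

definition acquire :: "'th \<Rightarrow> ('obj, 'th) lock \<Rightarrow> ('obj, 'th) gstate \<Rightarrow> ('obj, 'th) gstate" where
  "acquire th l s = s\<lparr>holder := (holder s)(l := Some th)\<rparr>"

definition release_all :: "'th \<Rightarrow> ('obj, 'th) gstate \<Rightarrow> ('obj, 'th) gstate" where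
  "release_all th s = s\<lparr>holder := (\<lambda>l. if holder s l = Some th then None else holder s l)\<rparr>"

definition set_lpc :: "'th \<Rightarrow> ('obj, 'th) lpc \<Rightarrow> ('obj, 'th) gstate \<Rightarrow> ('obj, 'th) gstate" where
  "set_lpc th p s = s\<lparr>lpc := (lpc s)(th := p)\<rparr>"

definition finish :: "'th \<Rightarrow> outcome \<Rightarrow> ('obj, 'th) gstate \<Rightarrow> ('obj, 'th) gstate" where
  "finish th r s = s\<lparr>result := (result s)((th, txn s th) := Some r),
                     txn := (txn s)(th := Suc (txn s th)),
                     lpc := (lpc s)(th := Idle)\<rparr>"

text \<open>One atomic step of thread th (locks: objects before transactions; within each
  kind in the linear order of the type, which is the fixed global order).\<close>
inductive step :: "('th \<Rightarrow> nat \<Rightarrow> 'obj op list option) \<Rightarrow> 'th::linorder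
                    \<Rightarrow> ('obj::linorder, 'th) gstate \<Rightarrow> ('obj, 'th) gstate \<Rightarrow> bool"
  for prog where
  no_more: "lpc s th = Idle \<Longrightarrow> prog th (txn s th) = None \<Longrightarrow>
      step prog th s (set_lpc th Finished s)"
| tx_begin: "lpc s th = Idle \<Longrightarrow> prog th (txn s th) = Some ops \<Longrightarrow>
      step prog th s (set_lpc th (Ready 0)
         (s\<lparr>counter := Suc (counter s), cts := (cts s)((th, txn s th) := counter s)\<rparr>))"
| tx_write: "lpc s th = Ready k \<Longrightarrow> prog th (txn s th) = Some ops \<Longrightarrow> k < length ops \<Longrightarrow>
      ops ! k = Wr x \<Longrightarrow> step prog th s (set_lpc th (Ready (Suc k)) s)"
| read_local: "lpc s th = Ready k \<Longrightarrow> prog th (txn s th) = Some ops \<Longrightarrow> k < length ops \<Longrightarrow>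
      ops ! k = Rd x \<Longrightarrow> Wr x \<in> set (take k ops) \<Longrightarrow>
      step prog th s (set_lpc th (Ready (Suc k)) s)"
| read_start: "lpc s th = Ready k \<Longrightarrow> prog th (txn s th) = Some ops \<Longrightarrow> k < length ops \<Longrightarrow>
      ops ! k = Rd x \<Longrightarrow> Wr x \<notin> set (take k ops) \<Longrightarrow>
      step prog th s (set_lpc th (RdLockObj k x) s)"
| read_lock_obj: "lpc s th = RdLockObj k x \<Longrightarrow> holder s (ObjL x) = None \<Longrightarrow>
      step prog th s (set_lpc th (RdLockTx k x) (acquire th (ObjL x) s))"
| read_lock_tx: "lpc s th = RdLockTx k x \<Longrightarrow> holder s (TxL (th, txn s th)) = None \<Longrightarrow>
      step prog th s (set_lpc th (RdCS k x n) (acquire th (TxL (th, txn s th)) s))"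
| read_cs: "lpc s th = RdCS k x (Suc n) \<Longrightarrow> step prog th s (set_lpc th (RdCS k x n) s)"
| read_ret: "lpc s th = RdCS k x 0 \<Longrightarrow>
      step prog th s (set_lpc th (Ready (Suc k)) (release_all th s))"
| read_abort: "lpc s th = RdCS k x 0 \<Longrightarrow>
      step prog th s (finish th Aborted (release_all th s))"
| tryc_start: "lpc s th = Ready k \<Longrightarrow> prog th (txn s th) = Some ops \<Longrightarrow> k = length ops \<Longrightarrow>
      step prog th s (set_lpc th (CLockObj (sorted_list_of_set (write_objs ops))) s)"
| tryc_lock_obj: "lpc s th = CLockObj (x # xs) \<Longrightarrow> holder s (ObjL x) = None \<Longrightarrow>
      step prog th s (set_lpc th (CLockObj xs) (acquire th (ObjL x) s))"
| tryc_readers: "lpc s th = CLockObj [] \<Longrightarrow> finite R \<Longrightarrow>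
      step prog th s (set_lpc th (CLockTx (sorted_list_of_set (insert (th, txn s th) R))) s)"
| tryc_lock_tx: "lpc s th = CLockTx (u # us) \<Longrightarrow> holder s (TxL u) = None \<Longrightarrow>
      step prog th s (set_lpc th (CLockTx us) (acquire th (TxL u) s))"
| tryc_enter: "lpc s th = CLockTx [] \<Longrightarrow> step prog th s (set_lpc th (CCS n) s)"
| tryc_cs: "lpc s th = CCS (Suc n) \<Longrightarrow> step prog th s (set_lpc th (CCS n) s)"
| tryc_commit: "lpc s th = CCS 0 \<Longrightarrow>
      step prog th s (finish th Committed (release_all th (s\<lparr>counter := Suc (counter s)\<rparr>)))"
| tryc_abort: "lpc s th = CCS 0 \<Longrightarrow>
      step prog th s (finish th Aborted (release_all th s))"

text \<open>An execution: a state sequence with a schedule; None = no thread moves.\<close>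
definition execution ::
  "('th \<Rightarrow> nat \<Rightarrow> 'obj op list option) \<Rightarrow> (nat \<Rightarrow> ('obj::linorder, 'th::linorder) gstate)
    \<Rightarrow> (nat \<Rightarrow> 'th option) \<Rightarrow> bool" where
  "execution prog \<sigma> sch \<longleftrightarrow> \<sigma> 0 = init_state \<and>
     (\<forall>i. case sch i of None \<Rightarrow> \<sigma> (Suc i) = \<sigma> i
                      | Some th \<Rightarrow> step prog th (\<sigma> i) (\<sigma> (Suc i)))"

definition enabled :: "('th \<Rightarrow> nat \<Rightarrow> 'obj op list option) \<Rightarrow> 'th::linorder
                        \<Rightarrow> ('obj::linorder, 'th) gstate \<Rightarrow> bool" where
  "enabled prog th s \<longleftrightarrow> (\<exists>s'. step prog th s s')"

definition fair_scheduler ::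
  "('th \<Rightarrow> nat \<Rightarrow> 'obj op list option) \<Rightarrow> (nat \<Rightarrow> ('obj::linorder, 'th::linorder) gstate)
    \<Rightarrow> (nat \<Rightarrow> 'th option) \<Rightarrow> bool" where
  "fair_scheduler prog \<sigma> sch \<longleftrightarrow>
     (\<forall>th i. (\<forall>j\<ge>i. enabled prog th (\<sigma> j)) \<longrightarrow> (\<exists>j\<ge>i. sch j = Some th))"

definition requests :: "'th \<Rightarrow> ('obj, 'th) lock \<Rightarrow> ('obj, 'th) gstate \<Rightarrow> bool" where
  "requests th l s \<longleftrightarrow>
     (\<exists>k x. lpc s th = RdLockObj k x \<and> l = ObjL x) \<or>
     (\<exists>k x. lpc s th = RdLockTx k x \<and> l = TxL (th, txn s th)) \<or>
     (\<exists>x xs. lpc s th = CLockObj (x # xs) \<and> l = ObjL x) \<or>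
     (\<exists>u us. lpc s th = CLockTx (u # us) \<and> l = TxL u)"

text \<open>Fair locks: a lock is eventually granted to every requester, i.e. a thread that
  keeps requesting a lock which is free again and again eventually obtains it.\<close>
definition fair_locks ::
  "(nat \<Rightarrow> ('obj, 'th) gstate) \<Rightarrow> (nat \<Rightarrow> 'th option) \<Rightarrow> bool" where
  "fair_locks \<sigma> sch \<longleftrightarrow>
     (\<forall>th l i. (\<forall>j\<ge>i. requests th l (\<sigma> j)) \<longrightarrow> (\<forall>k. \<exists>j\<ge>k. holder (\<sigma> j) l = None)
               \<longrightarrow> (\<exists>j\<ge>i. sch j = Some th))"

end

theory Submission
  imports Defs
begin

text \<open>
  Suppose a transaction never finishes. Its thread then stays in that transaction forever,
  and since every own step strictly decreases a measure of the work left (the loops inside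
  the critical sections being finite), the thread is eventually never scheduled again.
  By fairness of the scheduler it cannot be runnable, so it waits for a lock; by fairness
  of the locks that lock is eventually held forever, by a single thread, which is therefore
  stuck in the same way. Locks are acquired in a fixed global order, so a waiting thread
  holds only locks below the one it requests: the lock the holder waits for is strictly
  larger. As every thread waits for at most one lock, only finitely many locks are waited
  for forever, and a largest one gives a contradiction.
\<close>

definition pc_ok :: "('th \<Rightarrow> nat \<Rightarrow> 'obj::linorder op list option) \<Rightarrow> 'th::linorder
    \<Rightarrow> nat \<Rightarrow> ('obj, 'th) lpc \<Rightarrow> bool" where
  "pc_ok prog u n p = (case p of
     Ready k \<Rightarrow> (\<exists>ops. prog u n = Some ops \<and> k \<le> length ops)
   | RdLockObj k x \<Rightarrow> (\<exists>ops. prog u n = Some ops \<and> k < length ops)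
   | RdLockTx k x \<Rightarrow> (\<exists>ops. prog u n = Some ops \<and> k < length ops)
   | RdCS k x m \<Rightarrow> (\<exists>ops. prog u n = Some ops \<and> k < length ops)
   | CLockObj xs \<Rightarrow> sorted xs \<and> distinct xs
   | CLockTx us \<Rightarrow> sorted us \<and> distinct us
   | _ \<Rightarrow> True)"

definition may_hold :: "('obj::linorder, 'th::linorder) lpc \<Rightarrow> ('obj, 'th) lock \<Rightarrow> bool" where
  "may_hold p l = (case p of
     Idle \<Rightarrow> False | Finished \<Rightarrow> False | Ready k \<Rightarrow> False | RdLockObj k x \<Rightarrow> False
   | RdLockTx k x \<Rightarrow> l = ObjL x
   | RdCS k x m \<Rightarrow> True | CCS m \<Rightarrow> True
   | CLockObj xs \<Rightarrow> (\<exists>y. l = ObjL y \<and> (\<forall>z\<in>set xs. y < z))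
   | CLockTx us \<Rightarrow> (\<exists>y. l = ObjL y) \<or> (\<exists>v. l = TxL v \<and> (\<forall>w\<in>set us. v < w)))"

definition thread_inv :: "('th \<Rightarrow> nat \<Rightarrow> 'obj::linorder op list option)
    \<Rightarrow> ('obj, 'th::linorder) gstate \<Rightarrow> 'th \<Rightarrow> bool" where
  "thread_inv prog s u \<longleftrightarrow> pc_ok prog u (txn s u) (lpc s u) \<and>
     (\<forall>l. holder s l = Some u \<longrightarrow> may_hold (lpc s u) l)"

lemma step_other_thread:
  assumes "step prog t s s'" "u \<noteq> t"
  shows "lpc s' u = lpc s u" "txn s' u = txn s u"
    and "holder s' l = Some u \<Longrightarrow> holder s l = Some u"
  using assms
  by (induction rule: step.induct)
     (auto simp: set_lpc_def acquire_def release_all_def finish_def split: if_splits)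

lemma step_preserves_thread_inv_own:
  assumes "step prog t s s'" "thread_inv prog s t"
  shows "thread_inv prog s' t"
  using assms
proof (induction rule: step.induct)
  case (tryc_lock_obj s th x xs)
  then have "\<forall>w\<in>set xs. x < w"
    by (auto simp: thread_inv_def pc_ok_def intro: order_le_neq_trans)
  with tryc_lock_obj show ?case
    by (auto simp: thread_inv_def pc_ok_def may_hold_def set_lpc_def acquire_def)
next
  case (tryc_lock_tx s th u us)
  then have "\<forall>w\<in>set us. u < w"
    by (auto simp: thread_inv_def pc_ok_def intro: order_le_neq_trans)
  with tryc_lock_tx show ?case
    by (auto simp: thread_inv_def pc_ok_def may_hold_def set_lpc_def acquire_def
        simp del: split_paired_Ex)
next
  case (tryc_readers s th R)
  then show ?case
    by (auto simp: thread_inv_def pc_ok_def may_hold_def set_lpc_def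
        simp del: sorted_list_of_set_insert_remove)
qed (auto simp: thread_inv_def pc_ok_def may_hold_def set_lpc_def acquire_def
       release_all_def finish_def)

lemma step_preserves_thread_inv:
  assumes "step prog t s s'" "thread_inv prog s u"
  shows "thread_inv prog s' u"
proof (cases "u = t")
  case True
  with assms show ?thesis by (simp add: step_preserves_thread_inv_own)
next
  case False
  with assms show ?thesis
    unfolding thread_inv_def by (metis step_other_thread)
qed

lemma thread_inv_init: "thread_inv prog init_state u"
  by (simp add: thread_inv_def init_state_def pc_ok_def)

text \<open>The global lock order of KSFTM: object locks before transaction locks.\<close>
definition lock_key :: "('obj::linorder, 'th::linorder) lock \<Rightarrow> nat \<times> 'obj \<times> 'th tid" where
  "lock_key l = (case l of ObjL x \<Rightarrow> (0, x, undefined) | TxL u \<Rightarrow> (1, undefined, u))"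

lemma requested_lock_above_held:
  assumes "thread_inv prog s t" "requests t l s" "holder s l' = Some t"
  shows "lock_key l' < lock_key l"
  using assms
  by (cases l') (auto simp: thread_inv_def requests_def may_hold_def lock_key_def less_prod_def)

lemma requests_unique:
  assumes "requests t l s" "requests t l' s"
  shows "l = l'"
  using assms by (auto simp: requests_def)

lemma requests_cong:
  assumes "requests t l s" "lpc s' t = lpc s t" "txn s' t = txn s t"
  shows "requests t l s'"
  using assms by (auto simp: requests_def)

definition runnable :: "('obj, 'th) lpc \<Rightarrow> bool" where
  "runnable p = (case p of Ready _ \<Rightarrow> True | RdCS _ _ _ \<Rightarrow> True | CLockObj [] \<Rightarrow> True
     | CLockTx [] \<Rightarrow> True | CCS _ \<Rightarrow> True | _ \<Rightarrow> False)"

lemma runnable_enabled: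
  assumes "thread_inv prog s t" "runnable (lpc s t)"
  shows "enabled prog t s"
proof (cases "lpc s t")
  case (Ready k)
  then obtain ops where ops: "prog t (txn s t) = Some ops" "k \<le> length ops"
    using assms by (auto simp: thread_inv_def pc_ok_def)
  show ?thesis
  proof (cases "k = length ops")
    case True
    then show ?thesis unfolding enabled_def using Ready ops by (blast intro: step.tryc_start)
  next
    case False
    then have "k < length ops" using ops by simp
    then show ?thesis
      unfolding enabled_def using Ready ops
      by (cases "ops ! k"; cases "\<exists>x. ops ! k = Rd x \<and> Wr x \<in> set (take k ops)")
         (blast intro: step.read_local step.read_start step.tx_write)+
  qed
next
  case (RdCS k x n)
  then show ?thesis unfolding enabled_def
    by (cases n) (blast intro: step.read_cs step.read_ret)+
next
  case (CLockObj xs)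
  with assms(2) show ?thesis unfolding enabled_def
    by (cases xs) (auto simp: runnable_def intro: step.tryc_readers[where R="{}"])
next
  case (CLockTx us)
  with assms(2) show ?thesis unfolding enabled_def
    by (cases us) (auto simp: runnable_def intro: step.tryc_enter)
next
  case (CCS n)
  then show ?thesis unfolding enabled_def
    by (cases n) (blast intro: step.tryc_cs step.tryc_commit)+
qed (use assms(2) in \<open>auto simp: runnable_def\<close>)

lemma not_runnable_requests:
  assumes "\<not> runnable (lpc s t)" "lpc s t \<noteq> Idle" "lpc s t \<noteq> Finished"
  shows "\<exists>l. requests t l s"
  using assms
  by (cases "lpc s t") (auto simp: runnable_def requests_def split: list.splits)

text \<open>Lexicographic: operations still to run, then the phase within the current
  operation, then the remaining iterations of its loop.\<close>
definition work_left :: "('th \<Rightarrow> nat \<Rightarrow> 'obj op list option) \<Rightarrow> ('obj, 'th) gstate \<Rightarrow> 'th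
    \<Rightarrow> nat \<times> nat \<times> nat" where
  "work_left prog s t = (let len = length (the (prog t (txn s t))) in
     case lpc s t of
       Ready k \<Rightarrow> (Suc len - k, 4, 0)
     | RdLockObj k x \<Rightarrow> (Suc len - k, 3, 0)
     | RdLockTx k x \<Rightarrow> (Suc len - k, 2, 0)
     | RdCS k x n \<Rightarrow> (Suc len - k, 1, n)
     | CLockObj xs \<Rightarrow> (0, 3, length xs)
     | CLockTx us \<Rightarrow> (0, 2, length us)
     | CCS n \<Rightarrow> (0, 1, n)
     | _ \<Rightarrow> (0, 0, 0))"

lemma step_decreases_work_left:
  assumes "step prog t s s'" "thread_inv prog s t" "txn s' t = txn s t"
    and "lpc s t \<noteq> Idle" "lpc s t \<noteq> Finished"
  shows "work_left prog s' t < work_left prog s t"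
  using assms
  by (induction rule: step.induct)
     (auto simp: work_left_def thread_inv_def pc_ok_def less_prod_def set_lpc_def acquire_def
        release_all_def finish_def Let_def)

lemma step_keeps_active:
  assumes "step prog u s s'" "txn s' t = txn s t" "lpc s t \<noteq> Idle" "lpc s t \<noteq> Finished"
  shows "lpc s' t \<noteq> Idle \<and> lpc s' t \<noteq> Finished"
  using assms
  by (induction rule: step.induct)
     (auto simp: set_lpc_def acquire_def release_all_def finish_def)

lemma step_keeps_holder:
  assumes "step prog u s s'" "holder s l \<noteq> None" "holder s' l \<noteq> None"
  shows "holder s' l = holder s l"
  using assms
  by (induction rule: step.induct)
     (auto simp: set_lpc_def acquire_def release_all_def finish_def)

lemma step_changing_txn:
  assumes "step prog u s s'" "txn s' t \<noteq> txn s t"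
  shows "holder s' l \<noteq> Some t" "result s' (t, txn s t) \<noteq> None"
  using assms
  by (induction rule: step.induct)
     (auto simp: set_lpc_def acquire_def release_all_def finish_def split: if_splits)

lemma nonincreasing_eventually_constant:
  fixes f :: "nat \<Rightarrow> 'a::wellorder"
  assumes "\<And>j. i \<le> j \<Longrightarrow> f (Suc j) \<le> f j"
  shows "\<exists>j0\<ge>i. \<forall>j\<ge>j0. f j = f j0"
proof -
  define m where "m = (LEAST v. \<exists>k\<ge>i. v = f k)"
  have "\<exists>j\<ge>i. m = f j"
    unfolding m_def by (rule LeastI_ex) blast
  then obtain j0 where j0: "j0 \<ge> i" "f j0 = m" by auto
  have "f j = m" if "j \<ge> j0" for j
    using that
  proof (induction j rule: dec_induct)
    case (step j)
    have "i \<le> Suc j"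
      using step.hyps(1) j0(1) by simp
    then have "m \<le> f (Suc j)"
      unfolding m_def by (blast intro: Least_le)
    moreover have "f (Suc j) \<le> f j"
      using assms step.hyps j0 by simp
    ultimately show ?case
      using step.IH by simp
  qed (use j0 in simp)
  with j0 show ?thesis by auto
qed

definition blocked_forever :: "(nat \<Rightarrow> ('obj, 'th) gstate) \<Rightarrow> 'th \<Rightarrow> ('obj, 'th) lock \<Rightarrow> bool" where
  "blocked_forever \<sigma> t l \<longleftrightarrow> (\<exists>i B. \<forall>j\<ge>i. requests t l (\<sigma> j) \<and> holder (\<sigma> j) l = Some B)"

lemma blocked_forever_unique:
  assumes "blocked_forever \<sigma> t l" "blocked_forever \<sigma> t l'"
  shows "l = l'"
proof -
  obtain i i' where "\<forall>j\<ge>i. requests t l (\<sigma> j)" "\<forall>j\<ge>i'. requests t l' (\<sigma> j)"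
    using assms unfolding blocked_forever_def by blast
  then show ?thesis using requests_unique[of t l "\<sigma> (max i i')" l'] by simp
qed

locale ksftm_execution =
  fixes prog :: "'th::linorder \<Rightarrow> nat \<Rightarrow> 'obj::linorder op list option"
    and \<sigma> :: "nat \<Rightarrow> ('obj, 'th) gstate"
    and sch :: "nat \<Rightarrow> 'th option"
  assumes exec: "execution prog \<sigma> sch"
begin

lemma scheduled_step: "sch j = Some t \<Longrightarrow> step prog t (\<sigma> j) (\<sigma> (Suc j))"
  using exec unfolding execution_def by (metis option.simps(5))

lemma unscheduled_stutter: "sch j = None \<Longrightarrow> \<sigma> (Suc j) = \<sigma> j"
  using exec unfolding execution_def by (metis option.simps(4))

lemma thread_inv_execution: "thread_inv prog (\<sigma> j) u"
proof (induction j)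
  case 0
  then show ?case using exec thread_inv_init unfolding execution_def by metis
next
  case (Suc j)
  then show ?case
    by (cases "sch j") (auto simp: unscheduled_stutter
        intro: step_preserves_thread_inv[OF scheduled_step])
qed

lemma unscheduled_thread_unchanged:
  assumes "sch j \<noteq> Some t"
  shows "lpc (\<sigma> (Suc j)) t = lpc (\<sigma> j) t \<and> txn (\<sigma> (Suc j)) t = txn (\<sigma> j) t"
proof (cases "sch j")
  case (Some u)
  with assms have "u \<noteq> t" by simp
  with step_other_thread[OF scheduled_step[OF Some]] show ?thesis by simp
qed (simp add: unscheduled_stutter)

lemma held_lock_keeps_holder:
  "holder (\<sigma> j) l \<noteq> None \<Longrightarrow> holder (\<sigma> (Suc j)) l \<noteq> None \<Longrightarrow>
    holder (\<sigma> (Suc j)) l = holder (\<sigma> j) l"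
  by (cases "sch j") (auto dest: unscheduled_stutter scheduled_step step_keeps_holder)

lemma txn_change_finishes:
  assumes "txn (\<sigma> (Suc j)) t \<noteq> txn (\<sigma> j) t"
  shows "holder (\<sigma> (Suc j)) l \<noteq> Some t" "result (\<sigma> (Suc j)) (t, txn (\<sigma> j) t) \<noteq> None"
  using assms
  by (cases "sch j"; auto dest: unscheduled_stutter scheduled_step step_changing_txn)+

lemma holding_forever_keeps_txn:
  assumes "\<forall>j\<ge>i. holder (\<sigma> j) l = Some B" "j \<ge> i"
  shows "txn (\<sigma> j) B = txn (\<sigma> i) B"
  using assms(2)
proof (induction j rule: dec_induct)
  case (step j)
  with assms(1) txn_change_finishes(1)[of j B l] show ?case by fastforce
qed simp

lemma active_while_txn_constant:
  assumes txn_const: "\<forall>j\<ge>i. txn (\<sigma> j) t = txn (\<sigma> i) t"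
    and "lpc (\<sigma> i) t \<noteq> Idle" "lpc (\<sigma> i) t \<noteq> Finished" "j \<ge> i"
  shows "lpc (\<sigma> j) t \<noteq> Idle \<and> lpc (\<sigma> j) t \<noteq> Finished"
  using \<open>j \<ge> i\<close>
proof (induction j rule: dec_induct)
  case (step j)
  have "txn (\<sigma> (Suc j)) t = txn (\<sigma> j) t"
    using txn_const step.hyps(1) by (metis le_SucI)
  with step.IH show ?case
    by (cases "sch j") (auto simp: unscheduled_stutter dest: scheduled_step step_keeps_active)
qed (use assms in simp)

lemma stalled_thread_eventually_unscheduled:
  assumes txn_const: "\<forall>j\<ge>i. txn (\<sigma> j) t = txn (\<sigma> i) t"
    and "lpc (\<sigma> i) t \<noteq> Idle" "lpc (\<sigma> i) t \<noteq> Finished"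
  shows "\<exists>j0\<ge>i. \<forall>j\<ge>j0. sch j \<noteq> Some t"
proof -
  have txn_step: "txn (\<sigma> (Suc j)) t = txn (\<sigma> j) t" if "i \<le> j" for j
    using txn_const that by (metis le_SucI)
  have decrease: "work_left prog (\<sigma> (Suc j)) t < work_left prog (\<sigma> j) t"
    if "i \<le> j" "sch j = Some t" for j
  proof -
    have "lpc (\<sigma> j) t \<noteq> Idle \<and> lpc (\<sigma> j) t \<noteq> Finished"
      using active_while_txn_constant[OF assms that(1)] .
    with txn_step[OF that(1)] show ?thesis
      by (blast intro: step_decreases_work_left[OF scheduled_step[OF that(2)] thread_inv_execution])
  qed
  have "work_left prog (\<sigma> (Suc j)) t \<le> work_left prog (\<sigma> j) t" if "i \<le> j" for j
  proof (cases "sch j = Some t")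
    case True
    with decrease that show ?thesis by (simp add: less_imp_le)
  next
    case False
    then show ?thesis
      using unscheduled_thread_unchanged[OF False] by (simp add: work_left_def)
  qed
  then obtain j0 where j0: "j0 \<ge> i"
    and stable: "\<forall>j\<ge>j0. work_left prog (\<sigma> j) t = work_left prog (\<sigma> j0) t"
    using nonincreasing_eventually_constant[of i "\<lambda>j. work_left prog (\<sigma> j) t"] by blast
  have "sch j \<noteq> Some t" if "j \<ge> j0" for j
  proof
    assume "sch j = Some t"
    moreover have "i \<le> j" using j0 that by simp
    ultimately have "work_left prog (\<sigma> (Suc j)) t < work_left prog (\<sigma> j) t"
      by (rule decrease[rotated])
    moreover have "work_left prog (\<sigma> (Suc j)) t = work_left prog (\<sigma> j) t"
      using stable[rule_format, of j] stable[rule_format, of "Suc j"] that by simp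
    ultimately show False by simp
  qed
  with j0 show ?thesis by blast
qed

lemma unscheduled_thread_frozen:
  assumes "\<forall>j\<ge>j0. sch j \<noteq> Some t" "j \<ge> j0"
  shows "lpc (\<sigma> j) t = lpc (\<sigma> j0) t \<and> txn (\<sigma> j) t = txn (\<sigma> j0) t"
  using assms(2)
proof (induction j rule: dec_induct)
  case (step j)
  with assms(1) have "sch j \<noteq> Some t" by simp
  with step.IH show ?case using unscheduled_thread_unchanged by simp
qed simp

lemma eventually_held_forever_by_one:
  assumes "\<forall>j\<ge>k. holder (\<sigma> j) l \<noteq> None"
  shows "\<exists>B. \<forall>j\<ge>k. holder (\<sigma> j) l = Some B"
proof -
  obtain B where B: "holder (\<sigma> k) l = Some B" using assms by blast
  have "holder (\<sigma> j) l = Some B" if "j \<ge> k" for j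
    using that
  proof (induction j rule: dec_induct)
    case (step j)
    have "holder (\<sigma> j) l \<noteq> None" "holder (\<sigma> (Suc j)) l \<noteq> None"
      using assms step.hyps(1) by simp_all
    then have "holder (\<sigma> (Suc j)) l = holder (\<sigma> j) l"
      by (rule held_lock_keeps_holder)
    with step.IH show ?case by simp
  qed (rule B)
  then show ?thesis by blast
qed

lemma txn_stays_without_result:
  assumes "txn (\<sigma> i) t = n" "\<forall>j\<ge>i. result (\<sigma> j) (t, n) = None" "j \<ge> i"
  shows "txn (\<sigma> j) t = n"
  using assms(3)
proof (induction j rule: dec_induct)
  case (step j)
  with assms(2) txn_change_finishes(2)[of j t] show ?case by fastforce
qed (use assms(1) in simp)

end

locale fair_ksftm_execution = ksftm_execution prog \<sigma> sch
  for prog :: "'th::{finite,linorder} \<Rightarrow> nat \<Rightarrow> 'obj::linorder op list option"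
    and \<sigma> :: "nat \<Rightarrow> ('obj, 'th) gstate"
    and sch :: "nat \<Rightarrow> 'th option" +
  assumes fair_sch: "fair_scheduler prog \<sigma> sch"
    and fair_lck: "fair_locks \<sigma> sch"
begin

lemma unscheduled_active_thread_blocked:
  assumes unsch: "\<forall>j\<ge>j0. sch j \<noteq> Some t"
    and active: "lpc (\<sigma> j0) t \<noteq> Idle" "lpc (\<sigma> j0) t \<noteq> Finished"
  shows "\<exists>l. blocked_forever \<sigma> t l"
proof -
  have frozen: "lpc (\<sigma> j) t = lpc (\<sigma> j0) t" "txn (\<sigma> j) t = txn (\<sigma> j0) t" if "j \<ge> j0" for j
    using unscheduled_thread_frozen[OF unsch that] by auto
  have never_scheduled: "\<not> (\<exists>j\<ge>j0. sch j = Some t)"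
    using unsch by blast
  have not_runnable: "\<not> runnable (lpc (\<sigma> j0) t)"
  proof
    assume runs: "runnable (lpc (\<sigma> j0) t)"
    have "enabled prog t (\<sigma> j)" if "j \<ge> j0" for j
      using runnable_enabled[OF thread_inv_execution] runs frozen(1)[OF that] by simp
    moreover have "(\<forall>j\<ge>j0. enabled prog t (\<sigma> j)) \<longrightarrow> (\<exists>j\<ge>j0. sch j = Some t)"
      using fair_sch unfolding fair_scheduler_def by blast
    ultimately show False
      using never_scheduled by blast
  qed
  obtain l where requests_now: "requests t l (\<sigma> j0)"
    using not_runnable_requests[OF not_runnable active] by blast
  have requesting: "\<forall>j\<ge>j0. requests t l (\<sigma> j)"
    using requests_cong[OF requests_now frozen] by blast
  moreover have "(\<forall>j\<ge>j0. requests t l (\<sigma> j)) \<longrightarrow> (\<forall>k. \<exists>j\<ge>k. holder (\<sigma> j) l = None)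
      \<longrightarrow> (\<exists>j\<ge>j0. sch j = Some t)"
    using fair_lck unfolding fair_locks_def by blast
  ultimately have "\<not> (\<forall>k. \<exists>j\<ge>k. holder (\<sigma> j) l = None)"
    using never_scheduled by blast
  then obtain k where "\<forall>j\<ge>k. holder (\<sigma> j) l \<noteq> None" by auto
  then have "\<forall>j\<ge>max k j0. holder (\<sigma> j) l \<noteq> None" by simp
  then obtain B where "\<forall>j\<ge>max k j0. holder (\<sigma> j) l = Some B"
    using eventually_held_forever_by_one by blast
  with requesting have "\<forall>j\<ge>max k j0. requests t l (\<sigma> j) \<and> holder (\<sigma> j) l = Some B"
    by simp
  then show ?thesis unfolding blocked_forever_def by blast
qed

lemma stalled_thread_blocked:
  assumes "\<forall>j\<ge>i. txn (\<sigma> j) t = txn (\<sigma> i) t"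
    and "lpc (\<sigma> i) t \<noteq> Idle" "lpc (\<sigma> i) t \<noteq> Finished"
  shows "\<exists>l. blocked_forever \<sigma> t l"
proof -
  obtain j0 where j0: "j0 \<ge> i" "\<forall>j\<ge>j0. sch j \<noteq> Some t"
    using stalled_thread_eventually_unscheduled[OF assms] by blast
  moreover have "lpc (\<sigma> j0) t \<noteq> Idle \<and> lpc (\<sigma> j0) t \<noteq> Finished"
    using active_while_txn_constant[OF assms j0(1)] .
  ultimately show ?thesis using unscheduled_active_thread_blocked by blast
qed

lemma blocked_holder_blocked_higher:
  assumes "blocked_forever \<sigma> t l"
  shows "\<exists>B l'. blocked_forever \<sigma> B l' \<and> lock_key l < lock_key l'"
proof -
  obtain i0 B where blocked: "\<forall>j\<ge>i0. requests t l (\<sigma> j) \<and> holder (\<sigma> j) l = Some B"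
    using assms unfolding blocked_forever_def by blast
  then have "may_hold (lpc (\<sigma> i0) B) l"
    using thread_inv_execution[of i0 B] unfolding thread_inv_def by blast
  then have "lpc (\<sigma> i0) B \<noteq> Idle" "lpc (\<sigma> i0) B \<noteq> Finished"
    by (auto simp: may_hold_def)
  moreover have "\<forall>j\<ge>i0. txn (\<sigma> j) B = txn (\<sigma> i0) B"
    using holding_forever_keeps_txn blocked by blast
  ultimately obtain l' where l': "blocked_forever \<sigma> B l'"
    using stalled_thread_blocked by blast
  then obtain i1 where "\<forall>j\<ge>i1. requests B l' (\<sigma> j)"
    unfolding blocked_forever_def by blast
  with blocked have "requests B l' (\<sigma> (max i0 i1))" "holder (\<sigma> (max i0 i1)) l = Some B"
    by simp_all
  then have "lock_key l < lock_key l'"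
    by (rule requested_lock_above_held[OF thread_inv_execution])
  with l' show ?thesis by blast
qed

lemma no_stalled_thread:
  assumes "\<forall>j\<ge>i. txn (\<sigma> j) t = txn (\<sigma> i) t"
    and "lpc (\<sigma> i) t \<noteq> Idle" "lpc (\<sigma> i) t \<noteq> Finished"
  shows False
proof -
  define L where "L = {l. \<exists>u. blocked_forever \<sigma> u l}"
  have "L \<subseteq> range (\<lambda>u. THE l. blocked_forever \<sigma> u l)"
  proof
    fix l
    assume "l \<in> L"
    then obtain u where u: "blocked_forever \<sigma> u l" unfolding L_def by blast
    then have "l = (THE l. blocked_forever \<sigma> u l)"
      by (rule the_equality[symmetric]) (use blocked_forever_unique[OF _ u] in auto)
    then show "l \<in> range (\<lambda>u. THE l. blocked_forever \<sigma> u l)" by blast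
  qed
  then have "finite (lock_key ` L)"
    by (simp add: finite_subset)
  moreover have "lock_key ` L \<noteq> {}"
    using stalled_thread_blocked[OF assms] unfolding L_def by blast
  ultimately obtain m where "m \<in> lock_key ` L"
    and maximal: "\<forall>m'\<in>lock_key ` L. m \<le> m' \<longrightarrow> m = m'"
    by (blast dest: finite_has_maximal)
  then obtain l where "l \<in> L" "lock_key l = m" by blast
  then obtain l' where "l' \<in> L" "m < lock_key l'"
    using blocked_holder_blocked_higher unfolding L_def by blast
  with maximal show False by fastforce
qed

end

theorem theorem9:
  fixes prog :: "'th::{finite,linorder} \<Rightarrow> nat \<Rightarrow> 'obj::linorder op list option"
    and \<sigma> :: "nat \<Rightarrow> ('obj, 'th) gstate"
    and sch :: "nat \<Rightarrow> 'th option"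
  assumes "execution prog \<sigma> sch"
    and "fair_scheduler prog \<sigma> sch"
    and "fair_locks \<sigma> sch"
    and "txn (\<sigma> i) th = n" and "lpc (\<sigma> i) th \<noteq> Idle" and "lpc (\<sigma> i) th \<noteq> Finished"
  shows "\<exists>j\<ge>i. result (\<sigma> j) (th, n) = Some Committed \<or> result (\<sigma> j) (th, n) = Some Aborted"
proof (rule ccontr)
  interpret fair_ksftm_execution prog \<sigma> sch
    by unfold_locales (fact assms)+
  assume "\<not> ?thesis"
  then have "\<forall>j\<ge>i. result (\<sigma> j) (th, n) = None"
    by (metis not_None_eq outcome.exhaust)
  then have "\<forall>j\<ge>i. txn (\<sigma> j) th = txn (\<sigma> i) th"
    using txn_stays_without_result[OF assms(4)] assms(4) by simp
  then show False
    using no_stalled_thread assms(5,6) by blast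
qed

end
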